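(* Let $F,S_1,\ldots,S_m,S_a$ be formulas and $1\le i\le m$. If $\emptyset[F,S_1,\ldots,S_{i-1},S_i,\ldots,S_m]=\emptyset[S_1,\ldots,S_{i-1},S_i,\ldots,S_m]$, then $\emptyset[F,S_1,\ldots,S_{i-1},S_a,S_i,\ldots,S_m]=\emptyset[S_1,\ldots,S_{i-1},S_a,S_i,\ldots,S_m]$.
   Context: Propositional models are truth assignments over a finite set of variables; a formula used where a set of models is expected stands for its set of models. A doxastic state is a sequence $[C(0),\ldots,C(k)]$ of nonempty, pairwise disjoint sets of models covering all models. The flat doxastic state $\emptyset$ is $[\text{all models}]$. Lexicographic revision: $C\,\mathrm{lex}(A) = [C(0)\cap A,\ldots,C(k)\cap A, C(0)\setminus A,\ldots,C(k)\setminus A]$, empty sets discarded. $\emptyset[T_1,\ldots,T_n]$ denotes $\emptyset$ revised lexicographically by $T_1$, then $T_2$, ..., then $T_n$. *)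

theory Defs
  imports Main
begin

datatype 'v form = Var 'v | Top | Bot | Neg "'v form"
  | Conj "'v form" "'v form" | Disj "'v form" "'v form"

type_synonym 'v model = "'v set"

fun holds :: "'v model \<Rightarrow> 'v form \<Rightarrow> bool" where
  "holds M (Var x) = (x \<in> M)"
| "holds M Top = True"
| "holds M Bot = False"
| "holds M (Neg A) = (\<not> holds M A)"
| "holds M (Conj A B) = (holds M A \<and> holds M B)"
| "holds M (Disj A B) = (holds M A \<or> holds M B)"

definition models :: "'v form \<Rightarrow> 'v model set" where
  "models A = {M. holds M A}"

(* a doxastic state: list [C(0),...,C(k)] of classes of models *)
type_synonym 'v doxstate = "'v model set list"

definition flat :: "'v doxstate" where
  "flat = [UNIV]"

(* lexicographic revision, empty classes discarded *)
definition lex :: "'v doxstate \<Rightarrow> 'v form \<Rightarrow> 'v doxstate" where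
  "lex C A = filter (\<lambda>X. X \<noteq> {})
     (map (\<lambda>X. X \<inter> models A) C @ map (\<lambda>X. X - models A) C)"

(* \<emptyset>[T1,...,Tn] *)
definition revs :: "'v form list \<Rightarrow> 'v doxstate" where
  "revs Ts = foldl lex flat Ts"

end

theory Submission
  imports Defs
begin

text \<open>Revising first by F and then by the rest is the same as revising by the rest and
afterwards splitting every class into its F-part and its non-F-part. So the hypothesis says
exactly that every class of the state obtained from S lies inside or outside models F.
Inserting a further revision only refines the classes, and refinement preserves this
property; hence revising first by F still changes nothing. Neither the position of the
inserted revision nor the finiteness of the set of variables plays a role.\<close>

definition split_classes :: "'v doxstate \<Rightarrow> 'v model set \<Rightarrow> 'v doxstate" where
  "split_classes C X = concat (map (\<lambda>Y. filter (\<lambda>Z. Z \<noteq> {}) [Y \<inter> X, Y - X]) C)"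

definition homogeneous :: "'v doxstate \<Rightarrow> 'v model set \<Rightarrow> bool" where
  "homogeneous C X = (\<forall>Y\<in>set C. Y \<subseteq> X \<or> Y \<inter> X = {})"

definition refines :: "'v doxstate \<Rightarrow> 'v doxstate \<Rightarrow> bool" where
  "refines D C = (\<forall>Y\<in>set D. \<exists>Z\<in>set C. Y \<subseteq> Z)"

lemma split_classes_append:
  "split_classes (C @ D) X = split_classes C X @ split_classes D X"
  unfolding split_classes_def by simp

lemma split_classes_filter_nonempty:
  "split_classes (filter (\<lambda>Z. Z \<noteq> {}) C) X = split_classes C X"
  unfolding split_classes_def by (induction C) auto

lemma filter_nonempty_map_Int_split_classes:
  "filter (\<lambda>Z. Z \<noteq> {}) (map (\<lambda>Y. Y \<inter> A) (split_classes C X))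
     = split_classes (map (\<lambda>Y. Y \<inter> A) C) X"
  unfolding split_classes_def by (induction C) (auto simp: Int_ac Diff_Int_distrib2)

lemma filter_nonempty_map_Diff_split_classes:
  "filter (\<lambda>Z. Z \<noteq> {}) (map (\<lambda>Y. Y - A) (split_classes C X))
     = split_classes (map (\<lambda>Y. Y - A) C) X"
  unfolding split_classes_def
  by (induction C) (auto simp: Diff_Int_distrib2 Int_Diff Diff_eq Int_ac)

lemma lex_split_classes: "lex (split_classes C X) A = split_classes (lex C A) X"
  unfolding lex_def
  by (simp only: filter_append split_classes_append split_classes_filter_nonempty
      filter_nonempty_map_Int_split_classes filter_nonempty_map_Diff_split_classes)

lemma foldl_lex_split_classes:
  "foldl lex (split_classes C X) Ts = split_classes (foldl lex C Ts) X"
  by (induction Ts arbitrary: C) (auto simp: lex_split_classes)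

lemma revs_Cons: "revs (F # Ts) = split_classes (revs Ts) (models F)"
proof -
  have "lex flat F = split_classes flat (models F)"
    by (simp add: lex_def split_classes_def flat_def)
  then show ?thesis
    by (simp add: revs_def foldl_lex_split_classes)
qed

lemma empty_notin_revs: "{} \<notin> set (revs Ts)"
proof (cases Ts rule: rev_cases)
  case Nil
  then show ?thesis by (simp add: revs_def flat_def)
next
  case (snoc Ts' T)
  then show ?thesis by (simp add: revs_def lex_def)
qed

lemma homogeneous_split_classes: "homogeneous (split_classes C X) X"
  unfolding homogeneous_def split_classes_def by (auto split: if_splits)

lemma split_classes_homogeneous:
  assumes "{} \<notin> set C" and "homogeneous C X"
  shows "split_classes C X = C"
  using assms unfolding homogeneous_def split_classes_def
  by (induction C) (auto simp: Int_absorb2 Diff_triv)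

lemma revs_Cons_eq_iff: "revs (F # Ts) = revs Ts \<longleftrightarrow> homogeneous (revs Ts) (models F)"
proof
  assume "revs (F # Ts) = revs Ts"
  then have "split_classes (revs Ts) (models F) = revs Ts"
    by (simp add: revs_Cons)
  then show "homogeneous (revs Ts) (models F)"
    using homogeneous_split_classes[of "revs Ts" "models F"] by simp
next
  assume "homogeneous (revs Ts) (models F)"
  with empty_notin_revs have "split_classes (revs Ts) (models F) = revs Ts"
    by (rule split_classes_homogeneous)
  then show "revs (F # Ts) = revs Ts"
    by (simp only: revs_Cons)
qed

lemma homogeneous_if_refines:
  assumes "refines D C" and "homogeneous C X"
  shows "homogeneous D X"
  unfolding homogeneous_def
proof
  fix Y assume "Y \<in> set D"
  with assms(1) obtain Z where "Z \<in> set C" "Y \<subseteq> Z"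
    unfolding refines_def by blast
  with assms(2) show "Y \<subseteq> X \<or> Y \<inter> X = {}"
    unfolding homogeneous_def by blast
qed

lemma refines_lex:
  assumes "refines D C"
  shows "refines (lex D A) (lex C A)"
  unfolding refines_def
proof
  fix Y assume Y: "Y \<in> set (lex D A)"
  then have "Y \<noteq> {}" by (auto simp: lex_def)
  from Y obtain W where W: "W \<in> set D" "Y = W \<inter> models A \<or> Y = W - models A"
    by (auto simp: lex_def)
  from assms W(1) obtain Z where "Z \<in> set C" "W \<subseteq> Z"
    unfolding refines_def by blast
  show "\<exists>Z\<in>set (lex C A). Y \<subseteq> Z"
  proof (cases "Y = W \<inter> models A")
    case True
    with \<open>Y \<noteq> {}\<close> \<open>W \<subseteq> Z\<close> \<open>Z \<in> set C\<close> have "Z \<inter> models A \<in> set (lex C A)"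
      by (auto simp: lex_def)
    with True \<open>W \<subseteq> Z\<close> show ?thesis by blast
  next
    case False
    with W(2) have "Y = W - models A" by blast
    with \<open>Y \<noteq> {}\<close> \<open>W \<subseteq> Z\<close> \<open>Z \<in> set C\<close> have "Z - models A \<in> set (lex C A)"
      by (auto simp: lex_def)
    with \<open>Y = W - models A\<close> \<open>W \<subseteq> Z\<close> show ?thesis by blast
  qed
qed

lemma refines_lex_self: "refines (lex C A) C"
  unfolding refines_def lex_def by auto

lemma refines_foldl_lex: "refines D C \<Longrightarrow> refines (foldl lex D Ts) (foldl lex C Ts)"
  by (induction Ts arbitrary: D C) (auto simp: refines_lex)

lemma refines_revs_insert: "refines (revs (xs @ A # ys)) (revs (xs @ ys))"
  unfolding revs_def by (simp add: refines_foldl_lex refines_lex_self)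

lemma revs_Cons_eq_insert:
  assumes "revs (F # xs @ ys) = revs (xs @ ys)"
  shows "revs (F # xs @ A # ys) = revs (xs @ A # ys)"
proof -
  have "homogeneous (revs (xs @ ys)) (models F)"
    using assms revs_Cons_eq_iff by blast
  then have "homogeneous (revs (xs @ A # ys)) (models F)"
    using refines_revs_insert homogeneous_if_refines by blast
  then show ?thesis
    using revs_Cons_eq_iff by blast
qed

theorem mainTheorem10:
  fixes F Sa :: "('v::finite) form" and S :: "'v form list" and i :: nat
  assumes "1 \<le> i" and "i \<le> length S"
    and "revs (F # S) = revs S"
  shows "revs (F # take (i - 1) S @ [Sa] @ drop (i - 1) S)
       = revs (take (i - 1) S @ [Sa] @ drop (i - 1) S)"
  using revs_Cons_eq_insert[of F "take (i - 1) S" "drop (i - 1) S" Sa] assms(3)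
  by simp

end
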